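(* Let $K^*\in\mathbb{N}$, $M>0$, $p\in\mathbb{N}$, let $\mathcal{Y}\subset\mathbb{R}^{K^*}$ be a compact set, let $f_*:[-M,M]^p\to\mathcal{Y}$ be continuous, and let $g_*:\mathcal{Y}^2\to\mathbb{R}$ be a conditionally positive definite kernel. Let $\sigma:\mathbb{R}\to\mathbb{R}$ be either the ReLU function or a function that is non-constant, continuous, bounded and monotonically increasing. Then for every $\varepsilon>0$ there exist constants $C>0$ and $r_0>0$ such that for every $r\ge r_0$ there exist $K\in\mathbb{N}$, $T=T(K)\in\mathbb{N}$, $\boldsymbol A\in\mathbb{R}^{K\times T}$, $\boldsymbol B\in\mathbb{R}^{T\times p}$, $\boldsymbol c\in\mathbb{R}^T$ and $\gamma\in\mathbb{R}$ with $|\gamma|\le C r^2$ such that \[ \Big| g_*\big(f_*(\boldsymbol x),f_*(\boldsymbol x')\big) - \big( \langle f_{\boldsymbol\psi}(\boldsymbol x), f_{\boldsymbol\psi}(\boldsymbol x')\rangle - \gamma\big)\Big| < \varepsilon + C r^{-2} \] for all $(\boldsymbol x,\boldsymbol x')\in[-M,M]^{2p}$, where $f_{\boldsymbol\psi}(\boldsymbol x)=\boldsymbol A\,\boldsymbol\sigma(\boldsymbol B\boldsymbol x+\boldsymbol c)\in\mathbb{R}^K$ and $\boldsymbol\sigma$ denotes $\sigma$ applied element-wise.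
   Context: A kernel on $\mathcal{Y}^2$ is a symmetric continuous function $g:\mathcal{Y}^2\to\mathbb{R}$. A kernel $g$ is conditionally positive definite (CPD) if $\sum_{i=1}^n\sum_{j=1}^n c_ic_j g(\boldsymbol y_i,\boldsymbol y_j)\ge 0$ for all $n\in\mathbb{N}$, all $\boldsymbol y_1,\dots,\boldsymbol y_n\in\mathcal{Y}$ and all $c_1,\dots,c_n\in\mathbb{R}$ with $\sum_{i=1}^n c_i=0$. $\langle\cdot,\cdot\rangle$ is the Euclidean inner product. *)

theory Defs
  imports "HOL-Analysis.Analysis"
begin

definition is_kernel :: "'a::topological_space set \<Rightarrow> ('a \<Rightarrow> 'a \<Rightarrow> real) \<Rightarrow> bool" where
  "is_kernel Y g \<longleftrightarrow> (\<forall>y\<in>Y. \<forall>z\<in>Y. g y z = g z y)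
      \<and> continuous_on (Y \<times> Y) (\<lambda>(y, z). g y z)"

definition cpd_kernel :: "'a::topological_space set \<Rightarrow> ('a \<Rightarrow> 'a \<Rightarrow> real) \<Rightarrow> bool" where
  "cpd_kernel Y g \<longleftrightarrow> is_kernel Y g \<and>
     (\<forall>(n::nat) (y::nat \<Rightarrow> 'a) (c::nat \<Rightarrow> real).
        (\<forall>i<n. y i \<in> Y) \<longrightarrow> (\<Sum>i<n. c i) = 0 \<longrightarrow>
        (\<Sum>i<n. \<Sum>j<n. c i * c j * g (y i) (y j)) \<ge> 0)"

definition relu :: "real \<Rightarrow> real" where
  "relu x = max 0 x"

definition admissible_activation :: "(real \<Rightarrow> real) \<Rightarrow> bool" where
  "admissible_activation \<sigma> \<longleftrightarrow> \<sigma> = relu \<or>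
     ((\<exists>a b. \<sigma> a \<noteq> \<sigma> b) \<and> continuous_on UNIV \<sigma> \<and> bounded (range \<sigma>) \<and> mono \<sigma>)"

definition cube :: "real \<Rightarrow> (real ^ 'p) set" where
  "cube M = {x. \<forall>i. \<bar>x $ i\<bar> \<le> M}"

text \<open>Shallow network f_psi(x) = A sigma(B x + c) in R^K (components k < K),
  with A a K x T matrix, B a T x p matrix, c in R^T.\<close>
definition shallow_net ::
  "(real \<Rightarrow> real) \<Rightarrow> nat \<Rightarrow> (nat \<Rightarrow> nat \<Rightarrow> real) \<Rightarrow> (nat \<Rightarrow> 'p::finite \<Rightarrow> real)
     \<Rightarrow> (nat \<Rightarrow> real) \<Rightarrow> real ^ 'p \<Rightarrow> nat \<Rightarrow> real" where
  "shallow_net \<sigma> T A B c x k = (\<Sum>t<T. A k t * \<sigma> ((\<Sum>j\<in>UNIV. B t j * x $ j) + c t))"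

definition innerK :: "nat \<Rightarrow> (nat \<Rightarrow> real) \<Rightarrow> (nat \<Rightarrow> real) \<Rightarrow> real" where
  "innerK K u v = (\<Sum>k<K. u k * v k)"

end

theory Submission
  imports Defs
begin

text \<open>
  Discretise the conditionally positive definite kernel \<open>h x x' = g (f x) (f x')\<close> on a fine
  partition of unity \<open>\<psi>\<^sub>i\<close> with nodes \<open>p\<^sub>i\<close>, and centre it at a point \<open>y0\<close>: the centred Gram
  matrix \<open>h p\<^sub>i p\<^sub>j - h p\<^sub>i y0 - h y0 p\<^sub>j + h y0 y0\<close> is positive semidefinite, so after adding a
  small ridge it has a Cholesky factor \<open>L\<close>. This gives continuous features
  \<open>\<phi>\<^sub>l = \<Sigma>\<^sub>i L\<^sub>l\<^sub>i \<psi>\<^sub>i\<close> and a continuous \<open>u\<close> with \<open>h x x' \<approx> \<langle>\<phi> x, \<phi> x'\<rangle> + u x + u x' + \<kappa>\<close>.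
  Appending the coordinate \<open>r + u / r\<close> turns the right-hand side into an inner product minus the
  offset \<open>\<gamma> = r\<^sup>2 - \<kappa>\<close>, up to the error \<open>u x u x' / r\<^sup>2 = O(r\<^sup>-\<^sup>2)\<close>. Finally every feature is
  uniformly approximated by a shallow network: sums of exponentials \<open>exp (w \<bullet> x)\<close> are dense by
  Stone-Weierstrass, and a function of \<open>w \<bullet> x\<close> is a uniform limit of staircases built from
  rescaled copies of a bounded monotone activation.
\<close>

definition shallow_nets :: "(real \<Rightarrow> real) \<Rightarrow> (real ^ 'p::finite \<Rightarrow> nat \<Rightarrow> real) set" where
  "shallow_nets \<sigma> = {shallow_net \<sigma> T A B c | T A B c. True}"

lemma shallow_netsE:
  assumes "F \<in> shallow_nets \<sigma>"
  obtains T A B c where "\<And>x k. F x k = shallow_net \<sigma> T A B c x k"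
  using assms unfolding shallow_nets_def by auto

lemma shallow_netsI: "(\<And>x k. F x k = shallow_net \<sigma> T A B c x k) \<Longrightarrow> F \<in> shallow_nets \<sigma>"
  unfolding shallow_nets_def by (auto intro!: exI ext)

lemma sum_lessThan_add:
  "(\<Sum>t<a + b. f t) = (\<Sum>t<a. f t) + (\<Sum>t<b. f (a + t))" for f :: "nat \<Rightarrow> 'a::comm_monoid_add"
  by (induction b) (auto simp: add.commute add.left_commute)

lemma shallow_nets_zero: "(\<lambda>x k. 0) \<in> shallow_nets \<sigma>"
  by (rule shallow_netsI[of _ _ 0]) (simp add: shallow_net_def)

lemma shallow_nets_add:
  assumes "F \<in> shallow_nets \<sigma>" "G \<in> shallow_nets \<sigma>"
  shows "(\<lambda>x k. F x k + G x k) \<in> shallow_nets \<sigma>"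
proof -
  obtain T1 A1 B1 c1 where F: "\<And>x k. F x k = shallow_net \<sigma> T1 A1 B1 c1 x k"
    using shallow_netsE[OF assms(1)] by blast
  obtain T2 A2 B2 c2 where G: "\<And>x k. G x k = shallow_net \<sigma> T2 A2 B2 c2 x k"
    using shallow_netsE[OF assms(2)] by blast
  define A where "A k t = (if t < T1 then A1 k t else A2 k (t - T1))" for k t
  define B where "B t = (if t < T1 then B1 t else B2 (t - T1))" for t
  define c where "c t = (if t < T1 then c1 t else c2 (t - T1))" for t
  show ?thesis
    by (rule shallow_netsI[of _ _ "T1 + T2" A B c])
      (simp add: F G shallow_net_def sum_lessThan_add A_def B_def c_def)
qed

lemma shallow_nets_sum:
  fixes m :: nat
  assumes "\<And>i. i < m \<Longrightarrow> F i \<in> shallow_nets \<sigma>"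
  shows "(\<lambda>x k. \<Sum>i<m. F i x k) \<in> shallow_nets \<sigma>"
  using assms by (induction m) (simp_all add: shallow_nets_zero shallow_nets_add)

lemma shallow_nets_coordinate:
  assumes "F \<in> shallow_nets \<sigma>"
  shows "(\<lambda>x k. if k = l then F x 0 else 0) \<in> shallow_nets \<sigma>"
proof -
  obtain T A B c where F: "\<And>x k. F x k = shallow_net \<sigma> T A B c x k"
    using shallow_netsE[OF assms] by blast
  show ?thesis
    by (rule shallow_netsI[of _ _ T "\<lambda>k t. if k = l then A 0 t else 0" B c])
      (simp add: F shallow_net_def)
qed

text \<open>A ReLU network can realise the bounded ramp \<open>relu s - relu (s - 1)\<close> with two neurons, so
  both kinds of admissible activation reduce to a bounded monotone one.\<close>
definition squash :: "(real \<Rightarrow> real) \<Rightarrow> real \<Rightarrow> real" where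
  "squash \<sigma> = (if \<sigma> = relu then (\<lambda>s. relu s - relu (s - 1)) else \<sigma>)"

definition sigmoidal :: "(real \<Rightarrow> real) \<Rightarrow> bool" where
  "sigmoidal \<tau> \<longleftrightarrow> mono \<tau> \<and> bdd_above (range \<tau>) \<and> bdd_below (range \<tau>) \<and> (\<exists>a b. \<tau> a \<noteq> \<tau> b)"

lemma sigmoidal_squash:
  assumes "admissible_activation \<sigma>"
  shows "sigmoidal (squash \<sigma>)"
proof (cases "\<sigma> = relu")
  case True
  have "range (squash \<sigma>) \<subseteq> {0..1}" "squash \<sigma> 0 \<noteq> squash \<sigma> 1" "mono (squash \<sigma>)"
    unfolding squash_def True relu_def mono_def by auto
  then show ?thesis
    unfolding sigmoidal_def by (meson bdd_above_Icc bdd_below_Icc bdd_above_mono bdd_below_mono)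
next
  case False
  with assms show ?thesis
    unfolding admissible_activation_def sigmoidal_def squash_def
    by (auto intro: bounded_imp_bdd_above bounded_imp_bdd_below)
qed

lemma shallow_nets_neuron:
  "(\<lambda>x k. a * squash \<sigma> ((\<Sum>j\<in>UNIV. w j * x $ j) + b)) \<in> shallow_nets \<sigma>"
proof (cases "\<sigma> = relu")
  case True
  show ?thesis
    by (rule shallow_netsI[of _ _ 2 "\<lambda>k t. if t = 0 then a else - a" "\<lambda>_. w"
          "\<lambda>t. if t = 0 then b else b - 1"])
      (simp add: shallow_net_def squash_def True numeral_2_eq_2 algebra_simps)
next
  case False
  show ?thesis
    by (rule shallow_netsI[of _ _ 1 "\<lambda>_ _. a" "\<lambda>_. w" "\<lambda>_. b"])
      (simp add: shallow_net_def squash_def False)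
qed

lemma shallow_nets_const:
  assumes "admissible_activation \<sigma>"
  shows "(\<lambda>x k. d) \<in> shallow_nets \<sigma>"
proof -
  obtain z where z: "squash \<sigma> z \<noteq> 0"
    using sigmoidal_squash[OF assms] unfolding sigmoidal_def by metis
  have "(\<lambda>x k. d / squash \<sigma> z * squash \<sigma> ((\<Sum>j\<in>UNIV. 0 * x $ j) + z)) \<in> shallow_nets \<sigma>"
    by (rule shallow_nets_neuron)
  with z show ?thesis by simp
qed

lemma sigmoidal_bounds:
  fixes \<theta> :: real
  assumes "sigmoidal \<tau>" "\<theta> > 0"
  shows "\<exists>Lm Lp zm zp. Lm < Lp \<and> (\<forall>z. Lm \<le> \<tau> z \<and> \<tau> z \<le> Lp) \<and>
    Lp - \<theta> * (Lp - Lm) < \<tau> zp \<and> \<tau> zm < Lm + \<theta> * (Lp - Lm)"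
proof -
  have above: "bdd_above (range \<tau>)" and below: "bdd_below (range \<tau>)" and "\<exists>a b. \<tau> a \<noteq> \<tau> b"
    using assms(1) unfolding sigmoidal_def by auto
  define Lp where "Lp = Sup (range \<tau>)"
  define Lm where "Lm = Inf (range \<tau>)"
  have up: "\<tau> z \<le> Lp" and lo: "Lm \<le> \<tau> z" for z
    unfolding Lp_def Lm_def using above below by (auto intro: cSup_upper cInf_lower)
  obtain a b where "\<tau> a < \<tau> b"
    using \<open>\<exists>a b. \<tau> a \<noteq> \<tau> b\<close> by (metis linorder_neq_iff)
  then have "Lm < Lp" using up[of b] lo[of a] by linarith
  obtain zp where zp: "Lp - \<theta> * (Lp - Lm) < \<tau> zp"
    using less_cSup_iff[OF _ above, of "Lp - \<theta> * (Lp - Lm)"] \<open>Lm < Lp\<close> assms(2)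
    unfolding Lp_def by auto
  obtain zm where zm: "\<tau> zm < Lm + \<theta> * (Lp - Lm)"
    using cInf_less_iff[OF _ below, of "Lm + \<theta> * (Lp - Lm)"] \<open>Lm < Lp\<close> assms(2)
    unfolding Lm_def by auto
  show ?thesis using \<open>Lm < Lp\<close> up lo zp zm by blast
qed

lemma sigmoidal_step:
  fixes \<theta> :: real
  assumes "sigmoidal \<tau>" "\<theta> > 0"
  obtains a \<mu> b :: real
  where "\<And>s. 0 \<le> a * \<tau> (\<mu> * s) + b" "\<And>s. a * \<tau> (\<mu> * s) + b \<le> 1"
    "\<And>s. 1 \<le> s \<Longrightarrow> 1 - \<theta> \<le> a * \<tau> (\<mu> * s) + b"
    "\<And>s. s \<le> -1 \<Longrightarrow> a * \<tau> (\<mu> * s) + b \<le> \<theta>"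
proof -
  obtain Lm Lp zm zp where "Lm < Lp" and bounds: "\<forall>z. Lm \<le> \<tau> z \<and> \<tau> z \<le> Lp"
    and zp: "Lp - \<theta> * (Lp - Lm) < \<tau> zp" and zm: "\<tau> zm < Lm + \<theta> * (Lp - Lm)"
    using sigmoidal_bounds[OF assms] by blast
  have mono: "mono \<tau>" using assms(1) unfolding sigmoidal_def by simp
  define D where "D = Lp - Lm"
  have "D > 0" unfolding D_def using \<open>Lm < Lp\<close> by simp
  \<comment> \<open>for \<open>s \<ge> 1\<close> the argument \<open>\<mu> * s\<close> lies above \<open>zp\<close>, for \<open>s \<le> -1\<close> below \<open>zm\<close>\<close>
  define \<mu> where "\<mu> = \<bar>zp\<bar> + \<bar>zm\<bar> + 1"
  show thesis
  proof (rule that[of "1 / D" \<mu> "- Lm / D"])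
    fix s :: real
    have eq: "1 / D * \<tau> (\<mu> * s) + - Lm / D = (\<tau> (\<mu> * s) - Lm) / D"
      using \<open>D > 0\<close> by (simp add: field_simps)
    show "0 \<le> 1 / D * \<tau> (\<mu> * s) + - Lm / D" "1 / D * \<tau> (\<mu> * s) + - Lm / D \<le> 1"
      unfolding eq using \<open>D > 0\<close> bounds by (simp_all add: D_def)
    show "1 - \<theta> \<le> 1 / D * \<tau> (\<mu> * s) + - Lm / D" if "1 \<le> s"
    proof -
      have "\<mu> * 1 \<le> \<mu> * s" using that by (intro mult_left_mono) (auto simp: \<mu>_def)
      moreover have "zp \<le> \<mu>" unfolding \<mu>_def by linarith
      ultimately have "zp \<le> \<mu> * s" by simp
      then have "Lp - \<theta> * D < \<tau> (\<mu> * s)" using zp monoD[OF mono] unfolding D_def by force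
      then have "(1 - \<theta>) * D \<le> \<tau> (\<mu> * s) - Lm" unfolding D_def by (simp add: algebra_simps)
      then show ?thesis unfolding eq using \<open>D > 0\<close> by (simp add: pos_le_divide_eq)
    qed
    show "1 / D * \<tau> (\<mu> * s) + - Lm / D \<le> \<theta>" if "s \<le> -1"
    proof -
      have "\<mu> * s \<le> \<mu> * (-1)" using that by (intro mult_left_mono) (auto simp: \<mu>_def)
      moreover have "- \<mu> \<le> zm" unfolding \<mu>_def by linarith
      ultimately have "\<mu> * s \<le> zm" by simp
      then have "\<tau> (\<mu> * s) < Lm + \<theta> * D" using zm monoD[OF mono] unfolding D_def by force
      then show ?thesis unfolding eq using \<open>D > 0\<close> by (simp add: pos_divide_le_eq)
    qed
  qed
qed

lemma grid_cell:
  fixes h :: real and N :: nat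
  assumes "h > 0" "N > 0" "\<alpha> \<le> s" "s \<le> \<alpha> + N * h"
  obtains j where "j < N" "\<alpha> + j * h \<le> s" "s \<le> \<alpha> + (j + 1) * h"
proof -
  define i where "i = nat \<lfloor>(s - \<alpha>) / h\<rfloor>"
  have "i \<le> (s - \<alpha>) / h" "(s - \<alpha>) / h < i + 1"
    unfolding i_def using assms(1,3) by (simp_all, linarith)
  then have i: "\<alpha> + i * h \<le> s" "s < \<alpha> + (i + 1) * h"
    using assms(1) by (simp_all add: field_simps)
  show thesis
  proof (cases "i < N")
    case True
    with i show thesis by (intro that[of i]) (auto simp: algebra_simps)
  next
    case False
    then have "\<alpha> + (N - 1) * h \<le> s"
    proof -
      have "real (N - 1) \<le> i" using False by simp
      then have "(N - 1) * h \<le> i * h" using assms(1) by (intro mult_right_mono) auto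
      then show ?thesis using i(1) by linarith
    qed
    moreover have "N - 1 + 1 = N" using assms(2) by simp
    ultimately show thesis using assms(2,4) by (intro that[of "N - 1"]) simp_all
  qed
qed

lemma staircase_error:
  fixes \<Delta> H :: "nat \<Rightarrow> real"
  assumes "j < N" "\<And>k. k < N \<Longrightarrow> \<bar>\<Delta> k\<bar> \<le> e"
    and "\<And>k. k < j \<Longrightarrow> \<bar>H k - 1\<bar> \<le> \<theta>" "\<And>k. j < k \<Longrightarrow> \<bar>H k\<bar> \<le> \<theta>" "\<bar>H j\<bar> \<le> 1"
  shows "\<bar>(\<Sum>k<N. \<Delta> k * H k) - (\<Sum>k<j. \<Delta> k)\<bar> \<le> e * (N * \<theta> + 1)"
proof -
  define I where "I k = (if k < j then 1 else 0 :: real)" for k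
  have "(\<Sum>k<N. \<Delta> k * I k) = (\<Sum>k\<in>{..<N} \<inter> {k. k < j}. \<Delta> k)"
    by (simp add: I_def sum.inter_restrict if_distrib cong: if_cong)
  also have "{..<N} \<inter> {k. k < j} = {..<j}"
    using assms(1) by auto
  finally have "(\<Sum>k<N. \<Delta> k * H k) - (\<Sum>k<j. \<Delta> k) = (\<Sum>k<N. \<Delta> k * (H k - I k))"
    by (simp add: sum_subtractf algebra_simps)
  also have "\<bar>\<dots>\<bar> \<le> (\<Sum>k<N. e * (\<theta> + (if k = j then 1 else 0)))"
  proof (rule order_trans[OF sum_abs sum_mono])
    fix k assume "k \<in> {..<N}"
    have HI: "\<bar>H k - I k\<bar> \<le> \<theta> + (if k = j then 1 else 0)"
    proof (cases k j rule: linorder_cases)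
      case equal
      have "0 \<le> \<theta>" using assms(4)[of "Suc j"] by simp
      with equal show ?thesis using assms(5) by (simp add: I_def)
    qed (use assms(3,4)[of k] in \<open>simp_all add: I_def\<close>)
    have \<Delta>: "\<bar>\<Delta> k\<bar> \<le> e" using \<open>k \<in> {..<N}\<close> assms(2) by simp
    show "\<bar>\<Delta> k * (H k - I k)\<bar> \<le> e * (\<theta> + (if k = j then 1 else 0))"
      unfolding abs_mult by (rule mult_mono[OF \<Delta> HI]) (use \<Delta> in auto)
  qed
  also have "\<dots> = e * (N * \<theta> + 1)"
    using assms(1) by (simp add: sum.distrib sum_distrib_left[symmetric])
  finally show ?thesis .
qed

lemma staircase_approx:
  fixes F H :: "real \<Rightarrow> real" and h \<theta> e :: real and N :: nat
  assumes "h > 0" "N > 0" "s \<in> {\<alpha>..\<alpha> + N * h}"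
    and H: "\<And>s. 0 \<le> H s" "\<And>s. H s \<le> 1" "\<And>s. 1 \<le> s \<Longrightarrow> 1 - \<theta> \<le> H s" "\<And>s. s \<le> -1 \<Longrightarrow> H s \<le> \<theta>"
    and F: "\<And>x y. x \<in> {\<alpha>..\<alpha> + N * h} \<Longrightarrow> y \<in> {\<alpha>..\<alpha> + N * h} \<Longrightarrow> \<bar>x - y\<bar> \<le> h \<Longrightarrow>
      \<bar>F x - F y\<bar> \<le> e"
  shows "\<bar>F s - (F \<alpha> + (\<Sum>k<N. (F (\<alpha> + Suc k * h) - F (\<alpha> + k * h)) * H (2 * (s - (\<alpha> + k * h)) / h - 1)))\<bar>
    \<le> e * (N * \<theta> + 2)"
proof -
  define t where "t k = \<alpha> + k * h" for k :: nat
  define \<Delta> where "\<Delta> k = F (t (Suc k)) - F (t k)" for k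
  have t_mono: "t k \<le> t l" if "k \<le> l" for k l
    unfolding t_def using that \<open>h > 0\<close> by (simp add: mult_right_mono)
  have t_in: "t k \<in> {\<alpha>..\<alpha> + N * h}" if "k \<le> N" for k
    using t_mono[OF that] t_mono[of 0 k] by (simp add: t_def)
  have "\<alpha> \<le> s" "s \<le> \<alpha> + N * h" using assms(3) by simp_all
  then obtain j where j: "j < N" "t j \<le> s" "s \<le> t (Suc j)"
    using grid_cell[OF \<open>h > 0\<close> \<open>N > 0\<close>] unfolding t_def by (metis add.commute of_nat_Suc)
  have "\<bar>F s - F (t j)\<bar> \<le> e"
    using F[of s "t j"] assms(3) t_in[of j] j by (simp add: t_def algebra_simps)
  moreover have "(\<Sum>k<j. \<Delta> k) = F (t j) - F \<alpha>"
    unfolding \<Delta>_def using sum_lessThan_telescope[of "\<lambda>k. F (t k)" j] by (simp add: t_def[of 0])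
  moreover have "\<bar>(\<Sum>k<N. \<Delta> k * H (2 * (s - t k) / h - 1)) - (\<Sum>k<j. \<Delta> k)\<bar> \<le> e * (N * \<theta> + 1)"
  proof (rule staircase_error[OF j(1)])
    show "\<bar>\<Delta> k\<bar> \<le> e" if "k < N" for k
    proof -
      have "t (Suc k) \<in> {\<alpha>..\<alpha> + N * h}" "t k \<in> {\<alpha>..\<alpha> + N * h}" using t_in that by simp_all
      moreover have "\<bar>t (Suc k) - t k\<bar> \<le> h" using \<open>h > 0\<close> by (simp add: t_def algebra_simps)
      ultimately show ?thesis unfolding \<Delta>_def by (rule F)
    qed
    fix k
    show "\<bar>H (2 * (s - t k) / h - 1) - 1\<bar> \<le> \<theta>" if "k < j"
    proof -
      have "t k + h \<le> s" using t_mono[of "Suc k" j] that j by (simp add: t_def algebra_simps)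
      then have "1 \<le> 2 * (s - t k) / h - 1" using \<open>h > 0\<close> by (simp add: field_simps)
      from H(3)[OF this] show ?thesis using H(2) by (simp add: abs_le_iff)
    qed
    show "\<bar>H (2 * (s - t k) / h - 1)\<bar> \<le> \<theta>" if "j < k"
    proof -
      have "s \<le> t k" using t_mono[of "Suc j" k] that j by simp
      then have "2 * (s - t k) / h - 1 \<le> -1" using \<open>h > 0\<close> by (simp add: field_simps)
      from H(4)[OF this] show ?thesis using H(1) by simp
    qed
    show "\<bar>H (2 * (s - t j) / h - 1)\<bar> \<le> 1"
      using H(1,2) by (simp add: abs_le_iff)
  qed
  ultimately show ?thesis
    unfolding \<Delta>_def t_def abs_le_iff by (simp add: algebra_simps)
qed

lemma sigmoidal_uniform_approx:
  fixes F :: "real \<Rightarrow> real"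
  assumes \<tau>: "sigmoidal \<tau>" and F: "continuous_on {\<alpha>..\<beta>} F" and "\<alpha> < \<beta>" "\<eta> > 0"
  shows "\<exists>c a v b (N::nat). \<forall>s\<in>{\<alpha>..\<beta>}. \<bar>F s - (c + (\<Sum>k<N. a k * \<tau> (v k * s + b k)))\<bar> < \<eta>"
proof -
  obtain d where "d > 0" and d:
    "\<And>x y. x \<in> {\<alpha>..\<beta>} \<Longrightarrow> y \<in> {\<alpha>..\<beta>} \<Longrightarrow> \<bar>x - y\<bar> < d \<Longrightarrow> \<bar>F x - F y\<bar> < \<eta> / 4"
    using compact_uniformly_continuous[OF F compact_Icc] \<open>\<eta> > 0\<close>
    unfolding uniformly_continuous_on_def dist_real_def by (metis divide_pos_pos zero_less_numeral)
  define N :: nat where "N = nat \<lceil>(\<beta> - \<alpha>) / d\<rceil> + 1"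
  define h where "h = (\<beta> - \<alpha>) / N"
  have "N > 0" unfolding N_def by simp
  have "h > 0" unfolding h_def using \<open>N > 0\<close> \<open>\<alpha> < \<beta>\<close> by simp
  have "(\<beta> - \<alpha>) / d < N" unfolding N_def by linarith
  then have "h < d" unfolding h_def using \<open>d > 0\<close> \<open>N > 0\<close> by (simp add: field_simps)
  have \<beta>: "\<alpha> + N * h = \<beta>" unfolding h_def using \<open>N > 0\<close> by simp
  define \<theta> where "\<theta> = 1 / (N + 1)"
  have "\<theta> > 0" "N * \<theta> < 1" unfolding \<theta>_def by (simp_all add: field_simps)
  obtain a0 \<mu> b0 where "\<And>s. 0 \<le> a0 * \<tau> (\<mu> * s) + b0" "\<And>s. a0 * \<tau> (\<mu> * s) + b0 \<le> 1"
    "\<And>s. 1 \<le> s \<Longrightarrow> 1 - \<theta> \<le> a0 * \<tau> (\<mu> * s) + b0"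
    "\<And>s. s \<le> -1 \<Longrightarrow> a0 * \<tau> (\<mu> * s) + b0 \<le> \<theta>"
    using sigmoidal_step[OF \<tau> \<open>\<theta> > 0\<close>] by blast
  moreover define H where "H s = a0 * \<tau> (\<mu> * s) + b0" for s
  ultimately have H: "\<And>s. 0 \<le> H s" "\<And>s. H s \<le> 1" "\<And>s. 1 \<le> s \<Longrightarrow> 1 - \<theta> \<le> H s"
    "\<And>s. s \<le> -1 \<Longrightarrow> H s \<le> \<theta>"
    by simp_all
  have modulus: "\<bar>F x - F y\<bar> \<le> \<eta> / 4"
    if "x \<in> {\<alpha>..\<alpha> + N * h}" "y \<in> {\<alpha>..\<alpha> + N * h}" "\<bar>x - y\<bar> \<le> h" for x y
    using d[of x y] that \<open>h < d\<close> \<beta> by simp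
  define \<Delta> where "\<Delta> k = F (\<alpha> + Suc k * h) - F (\<alpha> + k * h)" for k :: nat
  have approx: "\<bar>F s - (F \<alpha> + (\<Sum>k<N. \<Delta> k * H (2 * (s - (\<alpha> + k * h)) / h - 1)))\<bar>
    \<le> \<eta> / 4 * (N * \<theta> + 2)" if "s \<in> {\<alpha>..\<beta>}" for s
    unfolding \<Delta>_def
    by (rule staircase_approx[where \<alpha> = \<alpha> and F = F and H = H, OF \<open>h > 0\<close> \<open>N > 0\<close> _ H modulus])
      (use that \<beta> in simp)
  have "\<eta> / 4 * (N * \<theta> + 2) < \<eta>"
    using \<open>N * \<theta> < 1\<close> \<open>\<eta> > 0\<close> by simp
  have expand: "F \<alpha> + (\<Sum>k<N. \<Delta> k * H (2 * (s - (\<alpha> + k * h)) / h - 1)) =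
    F \<alpha> + b0 * (\<Sum>k<N. \<Delta> k) + (\<Sum>k<N. (\<Delta> k * a0) * \<tau> (2 * \<mu> / h * s + - \<mu> * (2 * (\<alpha> + k * h) / h + 1)))"
    for s
  proof -
    have "\<mu> * (2 * (s - (\<alpha> + k * h)) / h - 1) = 2 * \<mu> / h * s + - \<mu> * (2 * (\<alpha> + k * h) / h + 1)" for k
      using \<open>h > 0\<close> by (simp add: field_simps)
    then show ?thesis
      by (simp only: H_def) (simp add: sum.distrib sum_distrib_left distrib_left ac_simps)
  qed
  have err: "\<forall>s\<in>{\<alpha>..\<beta>}. \<bar>F s - (F \<alpha> + b0 * (\<Sum>k<N. \<Delta> k)
    + (\<Sum>k<N. (\<Delta> k * a0) * \<tau> (2 * \<mu> / h * s + - \<mu> * (2 * (\<alpha> + k * h) / h + 1))))\<bar> < \<eta>"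
    using approx[unfolded expand] \<open>\<eta> / 4 * (N * \<theta> + 2) < \<eta>\<close> by fastforce
  show ?thesis
    by (rule exI[of _ "F \<alpha> + b0 * (\<Sum>k<N. \<Delta> k)"], rule exI[of _ "\<lambda>k. \<Delta> k * a0"],
        rule exI[of _ "\<lambda>_::nat. 2 * \<mu> / h"], rule exI[of _ "\<lambda>k::nat. - \<mu> * (2 * (\<alpha> + k * h) / h + 1)"],
        rule exI[of _ N]) (fact err)
qed

inductive_set exp_sums :: "(real ^ 'p::finite \<Rightarrow> real) set" where
  exp: "(\<lambda>x. c * exp (w \<bullet> x)) \<in> exp_sums"
| add: "f \<in> exp_sums \<Longrightarrow> g \<in> exp_sums \<Longrightarrow> (\<lambda>x. f x + g x) \<in> exp_sums"

lemma exp_sums_mult_exp: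
  assumes "g \<in> exp_sums"
  shows "(\<lambda>x. c * exp (w \<bullet> x) * g x) \<in> exp_sums"
  using assms
proof induction
  case (exp c' w')
  have "(\<lambda>x. c * exp (w \<bullet> x) * (c' * exp (w' \<bullet> x))) = (\<lambda>x. (c * c') * exp ((w + w') \<bullet> x))"
    by (auto simp: inner_add_left exp_add)
  then show ?case by (simp add: exp_sums.exp)
next
  case (add f g)
  then show ?case
    using exp_sums.add[OF add.IH] by (simp add: distrib_left)
qed

lemma exp_sums_mult:
  assumes "f \<in> exp_sums" "g \<in> exp_sums"
  shows "(\<lambda>x. f x * g x) \<in> exp_sums"
  using assms
proof induction
  case (exp c w)
  then show ?case by (rule exp_sums_mult_exp)
next
  case (add f1 f2)
  then show ?case
    using exp_sums.add[OF add.IH] by (simp add: distrib_right)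
qed

lemma continuous_on_exp_sums: "f \<in> exp_sums \<Longrightarrow> continuous_on S f"
  by (induction rule: exp_sums.induct) (auto intro!: continuous_intros)

lemma function_ring_on_exp_sums:
  assumes "compact S"
  shows "function_ring_on exp_sums S"
proof
  show "\<exists>f\<in>exp_sums. f x \<noteq> f y" if "x \<noteq> y" for x y :: "real ^ 'p"
  proof -
    obtain i where i: "x $ i \<noteq> y $ i" using \<open>x \<noteq> y\<close> by (auto simp: vec_eq_iff)
    have "(\<lambda>z. 1 * exp (axis i 1 \<bullet> z)) \<in> exp_sums" by (rule exp_sums.exp)
    then show ?thesis using i by (intro bexI) (auto simp: inner_axis')
  qed
qed (use assms exp_sums.add exp_sums_mult continuous_on_exp_sums exp_sums.exp[of _ 0] in auto)

lemma shallow_nets_approx_ridge: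
  fixes S :: "(real ^ 'p::finite) set" and \<phi> :: "real \<Rightarrow> real" and \<eta> :: real
  assumes \<sigma>: "admissible_activation \<sigma>" and "bounded S" and \<phi>: "continuous_on UNIV \<phi>" and "\<eta> > 0"
  shows "\<exists>F\<in>shallow_nets \<sigma>. \<forall>x\<in>S. \<bar>\<phi> (w \<bullet> x) - F x 0\<bar> < \<eta>"
proof -
  obtain R where "R > 0" and R: "\<And>x. x \<in> S \<Longrightarrow> norm x \<le> R"
    using \<open>bounded S\<close> by (auto simp: bounded_pos)
  define R1 where "R1 = norm w * R + 1"
  have "R1 > 0" unfolding R1_def using \<open>R > 0\<close> by (simp add: add_nonneg_pos)
  then have "-R1 < R1" by simp
  have inner_in: "w \<bullet> x \<in> {-R1..R1}" if "x \<in> S" for x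
  proof -
    have "\<bar>w \<bullet> x\<bar> \<le> norm w * norm x" by (rule Cauchy_Schwarz_ineq2)
    also have "\<dots> \<le> norm w * R" using R[OF that] by (simp add: mult_left_mono)
    finally show ?thesis unfolding R1_def by auto
  qed
  obtain a0 a v b and N :: nat where approx: "\<forall>s\<in>{-R1..R1}.
      \<bar>\<phi> s - (a0 + (\<Sum>k<N. a k * squash \<sigma> (v k * s + b k)))\<bar> < \<eta>"
    using sigmoidal_uniform_approx[OF sigmoidal_squash[OF \<sigma>] continuous_on_subset[OF \<phi> subset_UNIV]
        \<open>-R1 < R1\<close> \<open>\<eta> > 0\<close>] by blast
  define F where
    "F x k = a0 + (\<Sum>i<N. a i * squash \<sigma> ((\<Sum>j\<in>UNIV. (v i * w $ j) * x $ j) + b i))"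
    for x :: "real ^ 'p" and k :: nat
  have "F \<in> shallow_nets \<sigma>"
    unfolding F_def
    by (intro shallow_nets_add shallow_nets_const[OF \<sigma>] shallow_nets_sum shallow_nets_neuron)
  moreover have "\<bar>\<phi> (w \<bullet> x) - F x 0\<bar> < \<eta>" if "x \<in> S" for x
  proof -
    have "v i * (w \<bullet> x) + b i = (\<Sum>j\<in>UNIV. (v i * w $ j) * x $ j) + b i" for i
      by (simp add: inner_vec_def sum_distrib_left mult.assoc)
    moreover have "\<bar>\<phi> (w \<bullet> x) - (a0 + (\<Sum>i<N. a i * squash \<sigma> (v i * (w \<bullet> x) + b i)))\<bar> < \<eta>"
      using approx inner_in[OF that] by blast
    ultimately show ?thesis
      unfolding F_def by simp
  qed
  ultimately show ?thesis by blast
qed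

lemma exp_sums_approx_by_shallow_nets:
  fixes \<eta> :: real
  assumes \<sigma>: "admissible_activation \<sigma>" and "bounded S"
  shows "e \<in> exp_sums \<Longrightarrow> \<eta> > 0 \<Longrightarrow> \<exists>F\<in>shallow_nets \<sigma>. \<forall>x\<in>S. \<bar>e x - F x 0\<bar> < \<eta>"
proof (induction arbitrary: \<eta> rule: exp_sums.induct)
  case (exp c w)
  have "continuous_on UNIV (\<lambda>s. c * exp s)" by (intro continuous_intros)
  from shallow_nets_approx_ridge[OF \<sigma> \<open>bounded S\<close> this exp.prems] show ?case .
next
  case (add f g)
  obtain F G where "F \<in> shallow_nets \<sigma>" "G \<in> shallow_nets \<sigma>"
    and F: "\<forall>x\<in>S. \<bar>f x - F x 0\<bar> < \<eta> / 2" and G: "\<forall>x\<in>S. \<bar>g x - G x 0\<bar> < \<eta> / 2"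
    using add.IH \<open>\<eta> > 0\<close> by (meson half_gt_zero)
  have "\<bar>f x + g x - (F x 0 + G x 0)\<bar> < \<eta>" if "x \<in> S" for x
  proof -
    have "\<bar>f x - F x 0\<bar> < \<eta> / 2" "\<bar>g x - G x 0\<bar> < \<eta> / 2" using F G that by auto
    then show ?thesis by linarith
  qed
  then show ?case
    by (intro bexI[OF _ shallow_nets_add[OF \<open>F \<in> shallow_nets \<sigma>\<close> \<open>G \<in> shallow_nets \<sigma>\<close>]]) simp
qed

lemma shallow_nets_dense:
  fixes S :: "(real ^ 'p::finite) set"
  assumes "admissible_activation \<sigma>" "compact S" "continuous_on S \<phi>" "\<eta> > 0"
  obtains F where "F \<in> shallow_nets \<sigma>" "\<And>x. x \<in> S \<Longrightarrow> \<bar>\<phi> x - F x 0\<bar> < \<eta>"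
proof -
  interpret function_ring_on exp_sums S
    by (rule function_ring_on_exp_sums[OF assms(2)])
  obtain e where "e \<in> exp_sums" and e: "\<forall>x\<in>S. \<bar>\<phi> x - e x\<bar> < \<eta> / 2"
    using Stone_Weierstrass_basic[OF assms(3), of "\<eta> / 2"] assms(4) by auto
  obtain F where "F \<in> shallow_nets \<sigma>" and F: "\<forall>x\<in>S. \<bar>e x - F x 0\<bar> < \<eta> / 2"
    using exp_sums_approx_by_shallow_nets[OF assms(1) compact_imp_bounded[OF assms(2)] \<open>e \<in> exp_sums\<close>]
      assms(4) by (meson half_gt_zero)
  show thesis
  proof (rule that[OF \<open>F \<in> shallow_nets \<sigma>\<close>])
    fix x assume "x \<in> S"
    with e F have "\<bar>\<phi> x - e x\<bar> < \<eta> / 2" "\<bar>e x - F x 0\<bar> < \<eta> / 2" by auto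
    then show "\<bar>\<phi> x - F x 0\<bar> < \<eta>" by linarith
  qed
qed

lemma shallow_nets_dense_features:
  fixes S :: "(real ^ 'p::finite) set" and \<Phi> :: "nat \<Rightarrow> real ^ 'p \<Rightarrow> real"
  assumes "admissible_activation \<sigma>" "compact S" "\<And>l. l < K \<Longrightarrow> continuous_on S (\<Phi> l)" "\<eta> > 0"
  obtains F where "F \<in> shallow_nets \<sigma>" "\<And>l x. l < K \<Longrightarrow> x \<in> S \<Longrightarrow> \<bar>\<Phi> l x - F x l\<bar> < \<eta>"
proof -
  have ex: "\<forall>l\<in>{..<K}. \<exists>F. F \<in> shallow_nets \<sigma> \<and> (\<forall>x\<in>S. \<bar>\<Phi> l x - F x 0\<bar> < \<eta>)"
  proof
    fix l assume "l \<in> {..<K}"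
    then have "continuous_on S (\<Phi> l)" using assms(3) by simp
    then obtain F where "F \<in> shallow_nets \<sigma>" "\<And>x. x \<in> S \<Longrightarrow> \<bar>\<Phi> l x - F x 0\<bar> < \<eta>"
      using shallow_nets_dense[OF assms(1,2) _ assms(4)] by blast
    then show "\<exists>F. F \<in> shallow_nets \<sigma> \<and> (\<forall>x\<in>S. \<bar>\<Phi> l x - F x 0\<bar> < \<eta>)"
      by blast
  qed
  obtain Fs where Fs: "\<forall>l\<in>{..<K}. Fs l \<in> shallow_nets \<sigma> \<and> (\<forall>x\<in>S. \<bar>\<Phi> l x - Fs l x 0\<bar> < \<eta>)"
    using bchoice[OF ex] by blast
  have "(\<lambda>x k. \<Sum>l<K. if k = l then Fs l x 0 else 0) \<in> shallow_nets \<sigma>"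
    using Fs by (intro shallow_nets_sum shallow_nets_coordinate) auto
  then show thesis
    by (rule that) (use Fs in auto)
qed

lemma abs_mult_diff_le:
  fixes p p' q q' B \<eta> :: real
  assumes "\<bar>p - q\<bar> \<le> \<eta>" "\<bar>p' - q'\<bar> \<le> \<eta>" "\<bar>p\<bar> \<le> B" "\<bar>p'\<bar> \<le> B" "\<eta> \<le> 1"
  shows "\<bar>p * p' - q * q'\<bar> \<le> (2 * B + 1) * \<eta>"
proof -
  have "\<bar>q'\<bar> \<le> B + 1" using assms(2,4,5) by linarith
  have "p * p' - q * q' = p * (p' - q') + q' * (p - q)" by (simp add: algebra_simps)
  then have "\<bar>p * p' - q * q'\<bar> \<le> \<bar>p\<bar> * \<bar>p' - q'\<bar> + \<bar>q'\<bar> * \<bar>p - q\<bar>"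
    by (metis abs_mult abs_triangle_ineq)
  also have "\<dots> \<le> B * \<eta> + (B + 1) * \<eta>"
    using assms \<open>\<bar>q'\<bar> \<le> B + 1\<close> by (intro add_mono mult_mono) auto
  finally show ?thesis by (simp add: algebra_simps)
qed

lemma abs_innerK_diff_le:
  assumes "\<And>l. l < K \<Longrightarrow> \<bar>u l - u' l\<bar> \<le> \<eta>" "\<And>l. l < K \<Longrightarrow> \<bar>v l - v' l\<bar> \<le> \<eta>"
    and "\<And>l. l < K \<Longrightarrow> \<bar>u l\<bar> \<le> B" "\<And>l. l < K \<Longrightarrow> \<bar>v l\<bar> \<le> B" "\<eta> \<le> 1"
  shows "\<bar>innerK K u v - innerK K u' v'\<bar> \<le> K * ((2 * B + 1) * \<eta>)"
proof -
  have "\<bar>innerK K u v - innerK K u' v'\<bar> = \<bar>\<Sum>l<K. u l * v l - u' l * v' l\<bar>"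
    unfolding innerK_def by (simp add: sum_subtractf)
  also have "\<dots> \<le> (\<Sum>l<K. (2 * B + 1) * \<eta>)"
    using assms by (intro order_trans[OF sum_abs sum_mono] abs_mult_diff_le) auto
  finally show ?thesis by simp
qed

lemma continuous_features_bounded:
  fixes \<Phi> :: "nat \<Rightarrow> 'a::topological_space \<Rightarrow> real"
  assumes "compact S" "\<And>l. l < K \<Longrightarrow> continuous_on S (\<Phi> l)"
  obtains B where "B \<ge> 0" "\<And>l x. l < K \<Longrightarrow> x \<in> S \<Longrightarrow> \<bar>\<Phi> l x\<bar> \<le> B"
proof -
  have "continuous_on S (\<lambda>x. \<Sum>l<K. \<bar>\<Phi> l x\<bar>)"
    using assms(2) by (intro continuous_intros) auto
  then have "bounded ((\<lambda>x. \<Sum>l<K. \<bar>\<Phi> l x\<bar>) ` S)"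
    by (rule compact_imp_bounded[OF compact_continuous_image[OF _ assms(1)]])
  then obtain B where B: "\<And>x. x \<in> S \<Longrightarrow> \<bar>\<Sum>l<K. \<bar>\<Phi> l x\<bar>\<bar> \<le> B"
    unfolding bounded_iff by auto
  show thesis
  proof (rule that[of "\<bar>B\<bar>"])
    fix l x assume "l < K" "x \<in> S"
    then have "\<bar>\<Phi> l x\<bar> \<le> (\<Sum>l<K. \<bar>\<Phi> l x\<bar>)" by (intro member_le_sum) auto
    then show "\<bar>\<Phi> l x\<bar> \<le> \<bar>B\<bar>" using B[OF \<open>x \<in> S\<close>] by linarith
  qed simp
qed

lemma shallow_net_inner_approx:
  fixes S :: "(real ^ 'p::finite) set" and \<Phi> :: "nat \<Rightarrow> real ^ 'p \<Rightarrow> real"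
  assumes \<sigma>: "admissible_activation \<sigma>" and "compact S"
    and \<Phi>: "\<And>l. l < K \<Longrightarrow> continuous_on S (\<Phi> l)" and "\<epsilon> > 0"
  shows "\<exists>T A B c. \<forall>x\<in>S. \<forall>x'\<in>S. \<bar>innerK K (\<lambda>l. \<Phi> l x) (\<lambda>l. \<Phi> l x')
    - innerK K (shallow_net \<sigma> T A B c x) (shallow_net \<sigma> T A B c x')\<bar> \<le> \<epsilon>"
proof -
  obtain Bd where "Bd \<ge> 0" and Bd: "\<And>l x. l < K \<Longrightarrow> x \<in> S \<Longrightarrow> \<bar>\<Phi> l x\<bar> \<le> Bd"
    using continuous_features_bounded[where K = K and \<Phi> = \<Phi>, OF \<open>compact S\<close> \<Phi>] by blast
  define \<eta> where "\<eta> = min 1 (\<epsilon> / ((K + 1) * (2 * Bd + 1)))"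
  have "\<eta> > 0" "\<eta> \<le> 1" unfolding \<eta>_def using \<open>\<epsilon> > 0\<close> \<open>Bd \<ge> 0\<close> by auto
  have "K * ((2 * Bd + 1) * \<eta>) \<le> \<epsilon>"
  proof -
    have pos: "(K + 1) * (2 * Bd + 1) > 0" using \<open>Bd \<ge> 0\<close> by (simp add: add_nonneg_pos)
    have "K * ((2 * Bd + 1) * \<eta>) \<le> (K + 1) * ((2 * Bd + 1) * \<eta>)"
      using \<open>Bd \<ge> 0\<close> \<open>\<eta> > 0\<close> by (intro mult_right_mono) auto
    also have "\<dots> \<le> \<epsilon>"
      using pos_le_divide_eq[OF pos, of \<eta> \<epsilon>] unfolding \<eta>_def by (simp add: algebra_simps)
    finally show ?thesis .
  qed
  obtain F where "F \<in> shallow_nets \<sigma>" and F: "\<And>l x. l < K \<Longrightarrow> x \<in> S \<Longrightarrow> \<bar>\<Phi> l x - F x l\<bar> < \<eta>"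
    using shallow_nets_dense_features[where K = K and \<Phi> = \<Phi>, OF \<sigma> \<open>compact S\<close> \<Phi> \<open>\<eta> > 0\<close>] by blast
  obtain T A B c where "\<And>x k. F x k = shallow_net \<sigma> T A B c x k"
    using shallow_netsE[OF \<open>F \<in> shallow_nets \<sigma>\<close>] by blast
  then have net: "F = shallow_net \<sigma> T A B c" by (intro ext)
  have "\<bar>innerK K (\<lambda>l. \<Phi> l x) (\<lambda>l. \<Phi> l x') - innerK K (F x) (F x')\<bar> \<le> \<epsilon>"
    if "x \<in> S" "x' \<in> S" for x x'
    using abs_innerK_diff_le[of K "\<lambda>l. \<Phi> l x" "F x" \<eta> "\<lambda>l. \<Phi> l x'" "F x'" Bd] that
      F Bd \<open>\<eta> \<le> 1\<close> \<open>K * ((2 * Bd + 1) * \<eta>) \<le> \<epsilon>\<close> by force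
  then show ?thesis
    unfolding net by blast
qed

lemma cpd_kernel_comp:
  fixes f :: "'a::topological_space \<Rightarrow> 'b::topological_space"
  assumes g: "cpd_kernel Y g" and f: "continuous_on S f" "f ` S \<subseteq> Y"
  shows "cpd_kernel S (\<lambda>x x'. g (f x) (f x'))"
proof -
  have sym: "\<forall>y\<in>Y. \<forall>z\<in>Y. g y z = g z y" and cont: "continuous_on (Y \<times> Y) (\<lambda>(y, z). g y z)"
    using g unfolding cpd_kernel_def is_kernel_def by auto
  have cpd: "\<And>(n::nat) y c. (\<forall>i<n. y i \<in> Y) \<Longrightarrow> (\<Sum>i<n. c i) = 0 \<Longrightarrow>
      (\<Sum>i<n. \<Sum>j<n. c i * c j * g (y i) (y j)) \<ge> 0"
    using g unfolding cpd_kernel_def by blast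
  have "continuous_on (S \<times> S) (\<lambda>z. f (fst z))" "continuous_on (S \<times> S) (\<lambda>z. f (snd z))"
    by (auto intro: continuous_on_compose2[OF f(1) continuous_on_fst]
        continuous_on_compose2[OF f(1) continuous_on_snd])
  then have "continuous_on (S \<times> S) (\<lambda>z. (f (fst z), f (snd z)))"
    by (rule continuous_on_Pair)
  then have "continuous_on (S \<times> S) ((\<lambda>(y, z). g y z) \<circ> (\<lambda>z. (f (fst z), f (snd z))))"
    using f(2) by (intro continuous_on_compose continuous_on_subset[OF cont]) auto
  then have "continuous_on (S \<times> S) (\<lambda>(x, x'). g (f x) (f x'))"
    by (simp add: o_def case_prod_beta)
  moreover have "\<forall>x\<in>S. \<forall>x'\<in>S. g (f x) (f x') = g (f x') (f x)"
    using sym f(2) by auto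
  moreover have "(\<Sum>i<n. \<Sum>j<n. c i * c j * g (f (y i)) (f (y j))) \<ge> 0"
    if "\<forall>i<n. y i \<in> S" "(\<Sum>i<n. c i) = 0" for n :: nat and y c
    using cpd[of n "f \<circ> y" c] that f(2) by auto
  ultimately show ?thesis
    unfolding cpd_kernel_def is_kernel_def by blast
qed

definition partition_of_unity_on :: "'a::topological_space set \<Rightarrow> nat \<Rightarrow> (nat \<Rightarrow> 'a \<Rightarrow> real) \<Rightarrow> bool"
  where "partition_of_unity_on S n \<psi> \<longleftrightarrow> (\<forall>i. continuous_on S (\<psi> i)) \<and>
    (\<forall>i. \<forall>x\<in>S. 0 \<le> \<psi> i x) \<and> (\<forall>x\<in>S. (\<Sum>i<n. \<psi> i x) = 1)"

lemma partition_of_unity_subordinate_balls: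
  fixes S :: "'a::metric_space set"
  assumes "compact S" "\<delta> > 0"
  obtains n p \<psi> where "\<forall>i<n. p i \<in> S" "partition_of_unity_on S n \<psi>"
    "\<forall>i. \<forall>x\<in>S. \<psi> i x \<noteq> 0 \<longrightarrow> dist x (p i) < \<delta>"
proof -
  obtain k where k: "finite k" "k \<subseteq> S" "S \<subseteq> (\<Union>x\<in>k. ball x \<delta>)"
    using seq_compact_imp_totally_bounded[OF compact_imp_seq_compact[OF assms(1)]] assms(2) by metis
  obtain p where p: "bij_betw p {..<card k} k"
    using ex_bij_betw_nat_finite[OF k(1)] by (auto simp: atLeast0LessThan)
  define n where "n = card k"
  have p_in: "p i \<in> S" if "i < n" for i
    using p k(2) that unfolding n_def bij_betw_def by auto
  have near: "\<exists>i<n. dist x (p i) < \<delta>" if "x \<in> S" for x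
  proof -
    obtain q where "q \<in> k" "dist q x < \<delta>" using k(3) \<open>x \<in> S\<close> by auto
    moreover have "q \<in> p ` {..<n}"
      using p \<open>q \<in> k\<close> unfolding n_def bij_betw_def by simp
    then obtain i where "i < n" "p i = q" by auto
    ultimately show ?thesis by (auto simp: dist_commute)
  qed
  define \<rho> where "\<rho> i x = max 0 (\<delta> - dist x (p i))" for i x
  define D where "D x = (\<Sum>i<n. \<rho> i x)" for x
  have \<rho>_cont: "continuous_on S (\<rho> i)" for i
    unfolding \<rho>_def by (intro continuous_intros)
  have D_pos: "D x > 0" if x: "x \<in> S" for x
  proof -
    obtain i where "i < n" "dist x (p i) < \<delta>" using near[OF x] by blast
    then have "0 < \<rho> i x" unfolding \<rho>_def by simp
    also have "\<rho> i x \<le> D x"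
      unfolding D_def using \<open>i < n\<close> by (intro member_le_sum) (auto simp: \<rho>_def)
    finally show ?thesis .
  qed
  show thesis
  proof (rule that[of n p "\<lambda>i x. \<rho> i x / D x"])
    have "continuous_on S (\<lambda>x. \<rho> i x / D x)" for i
      using D_pos unfolding D_def by (intro continuous_intros \<rho>_cont) force
    moreover have "(\<Sum>i<n. \<rho> i x / D x) = 1" if "x \<in> S" for x
      using D_pos[OF that] unfolding D_def by (simp add: sum_divide_distrib[symmetric])
    ultimately show "partition_of_unity_on S n (\<lambda>i x. \<rho> i x / D x)"
      unfolding partition_of_unity_on_def using D_pos by (auto simp: \<rho>_def intro: divide_nonneg_pos)
    show "\<forall>i. \<forall>x\<in>S. \<rho> i x / D x \<noteq> 0 \<longrightarrow> dist x (p i) < \<delta>"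
      unfolding \<rho>_def by (auto simp: max_def)
  qed (use p_in in auto)
qed

definition centered_kernel :: "('a \<Rightarrow> 'a \<Rightarrow> real) \<Rightarrow> 'a \<Rightarrow> 'a \<Rightarrow> 'a \<Rightarrow> real" where
  "centered_kernel h y0 x x' = h x x' - h x y0 - h y0 x' + h y0 y0"

lemma double_sum_centered:
  fixes a b U V :: "nat \<Rightarrow> real" and H :: "nat \<Rightarrow> nat \<Rightarrow> real"
  shows "(\<Sum>i<n. \<Sum>j<n. a i * b j * (H i j - U i - V j + k)) =
    (\<Sum>i<n. \<Sum>j<n. a i * b j * H i j) - (\<Sum>i<n. a i * U i) * (\<Sum>j<n. b j)
    - (\<Sum>i<n. a i) * (\<Sum>j<n. b j * V j) + k * (\<Sum>i<n. a i) * (\<Sum>j<n. b j)"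
proof -
  have "(\<Sum>i<n. \<Sum>j<n. a i * b j * (H i j - U i - V j + k)) =
    (\<Sum>i<n. \<Sum>j<n. a i * b j * H i j) - (\<Sum>i<n. \<Sum>j<n. (a i * U i) * b j)
    - (\<Sum>i<n. \<Sum>j<n. a i * (b j * V j)) + (\<Sum>i<n. \<Sum>j<n. (k * a i) * b j)"
    by (simp add: sum.distrib sum_subtractf algebra_simps)
  also have "(\<Sum>i<n. \<Sum>j<n. (a i * U i) * b j) = (\<Sum>i<n. a i * U i) * (\<Sum>j<n. b j)"
    by (rule sum_product[symmetric])
  also have "(\<Sum>i<n. \<Sum>j<n. a i * (b j * V j)) = (\<Sum>i<n. a i) * (\<Sum>j<n. b j * V j)"
    by (rule sum_product[symmetric])
  also have "(\<Sum>i<n. \<Sum>j<n. (k * a i) * b j) = k * (\<Sum>i<n. a i) * (\<Sum>j<n. b j)"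
    by (simp add: sum_product[symmetric] sum_distrib_left)
  finally show ?thesis .
qed

lemma centered_kernel_psd:
  fixes a :: "nat \<Rightarrow> real" and n :: nat
  assumes "cpd_kernel S h" "y0 \<in> S" "\<And>i. i < n \<Longrightarrow> p i \<in> S"
  shows "(\<Sum>i<n. \<Sum>j<n. a i * a j * centered_kernel h y0 (p i) (p j)) \<ge> 0"
proof -
  define s where "s = (\<Sum>i<n. a i)"
  define y where "y i = (if i < n then p i else y0)" for i
  define c where "c i = (if i < n then a i else - s)" for i
  have "(\<Sum>i<Suc n. c i) = 0" unfolding c_def s_def by simp
  moreover have "\<forall>i<Suc n. y i \<in> S" unfolding y_def using assms(2,3) by auto
  ultimately have "0 \<le> (\<Sum>i<Suc n. \<Sum>j<Suc n. c i * c j * h (y i) (y j))"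
    using assms(1) unfolding cpd_kernel_def by blast
  also have "\<dots> = (\<Sum>i<n. \<Sum>j<n. a i * a j * h (p i) (p j)) + (\<Sum>i<n. a i * (- s) * h (p i) y0)
      + (\<Sum>j<n. (- s) * a j * h y0 (p j)) + (- s) * (- s) * h y0 y0"
    by (simp add: c_def y_def sum.distrib sum_subtractf sum_negf)
  also have "\<dots> = (\<Sum>i<n. \<Sum>j<n. a i * a j * h (p i) (p j)) - (\<Sum>i<n. a i * h (p i) y0) * s
      - s * (\<Sum>j<n. a j * h y0 (p j)) + h y0 y0 * s * s"
    by (simp add: sum_distrib_left sum_distrib_right sum_negf algebra_simps)
  also have "\<dots> = (\<Sum>i<n. \<Sum>j<n. a i * a j * centered_kernel h y0 (p i) (p j))"
    unfolding centered_kernel_def double_sum_centered s_def by (simp add: algebra_simps)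
  finally show ?thesis .
qed

lemma schur_complement_identity:
  fixes P :: "nat \<Rightarrow> nat \<Rightarrow> real" and a b :: "nat \<Rightarrow> real"
  assumes sym: "\<And>i. i < n \<Longrightarrow> P i n = P n i" and "P n n \<noteq> 0"
  shows "(\<Sum>i<Suc n. \<Sum>j<Suc n. a i * b j * P i j) =
     (\<Sum>i<n. \<Sum>j<n. a i * b j * (P i j - P i n * P n j / P n n))
     + (\<Sum>i<Suc n. P n i * a i) * (\<Sum>j<Suc n. P n j * b j) / P n n"
proof -
  define d where "d = P n n"
  define \<alpha> where "\<alpha> = (\<Sum>i<n. P n i * a i)"
  define \<beta> where "\<beta> = (\<Sum>j<n. P n j * b j)"
  have "(\<Sum>i<Suc n. \<Sum>j<Suc n. a i * b j * P i j) = (\<Sum>i<n. \<Sum>j<n. a i * b j * P i j)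
      + (\<Sum>i<n. a i * b n * P i n) + (\<Sum>j<n. a n * b j * P n j) + a n * b n * d"
    by (simp add: sum.distrib d_def algebra_simps)
  also have "(\<Sum>i<n. a i * b n * P i n) = b n * \<alpha>"
    unfolding \<alpha>_def sum_distrib_left by (rule sum.cong) (auto simp: sym)
  also have "(\<Sum>j<n. a n * b j * P n j) = a n * \<beta>"
    unfolding \<beta>_def sum_distrib_left by (rule sum.cong) auto
  finally have lhs: "(\<Sum>i<Suc n. \<Sum>j<Suc n. a i * b j * P i j) =
      (\<Sum>i<n. \<Sum>j<n. a i * b j * P i j) + b n * \<alpha> + a n * \<beta> + a n * b n * d" .
  have "(\<Sum>i<n. \<Sum>j<n. a i * b j * (P i j - P i n * P n j / P n n)) =
      (\<Sum>i<n. \<Sum>j<n. a i * b j * P i j - (P n i * a i) * (P n j * b j) / d)"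
    by (intro sum.cong refl) (simp add: sym d_def algebra_simps)
  also have "\<dots> = (\<Sum>i<n. \<Sum>j<n. a i * b j * P i j) - \<alpha> * \<beta> / d"
    unfolding \<alpha>_def \<beta>_def sum_product sum_divide_distrib by (simp add: sum_subtractf)
  finally have schur: "(\<Sum>i<n. \<Sum>j<n. a i * b j * (P i j - P i n * P n j / P n n)) =
      (\<Sum>i<n. \<Sum>j<n. a i * b j * P i j) - \<alpha> * \<beta> / d" .
  have "(\<Sum>i<Suc n. P n i * a i) * (\<Sum>j<Suc n. P n j * b j) / P n n = (\<alpha> + d * a n) * (\<beta> + d * b n) / d"
    unfolding \<alpha>_def \<beta>_def d_def by (simp add: algebra_simps)
  also have "\<dots> = \<alpha> * \<beta> / d + b n * \<alpha> + a n * \<beta> + a n * b n * d"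
    using \<open>P n n \<noteq> 0\<close> unfolding d_def by (simp add: field_simps)
  finally show ?thesis unfolding lhs schur by simp
qed

lemma pos_def_diag_pos:
  fixes P :: "nat \<Rightarrow> nat \<Rightarrow> real"
  assumes pd: "\<And>a. (\<exists>i<n. a i \<noteq> 0) \<Longrightarrow> (\<Sum>i<n. \<Sum>j<n. a i * a j * P i j) > 0" and "k < n"
  shows "P k k > 0"
proof -
  define e where "e i = (if i = k then 1 else 0 :: real)" for i
  have e: "e j * x = (if j = k then x else 0)" for j x
    by (simp add: e_def)
  have "(\<Sum>i<n. \<Sum>j<n. e i * e j * P i j) > 0"
    using \<open>k < n\<close> by (intro pd) (auto simp: e_def)
  also have "(\<Sum>i<n. \<Sum>j<n. e i * e j * P i j) = (\<Sum>i<n. e i * (\<Sum>j<n. e j * P i j))"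
    by (simp add: sum_distrib_left mult.assoc)
  also have "\<dots> = P k k"
    using \<open>k < n\<close> by (simp add: e)
  finally show ?thesis .
qed

lemma schur_complement_pos_def:
  fixes P :: "nat \<Rightarrow> nat \<Rightarrow> real"
  assumes sym: "\<And>i. i < n \<Longrightarrow> P i n = P n i"
    and pd: "\<And>a. (\<exists>i<Suc n. a i \<noteq> 0) \<Longrightarrow> (\<Sum>i<Suc n. \<Sum>j<Suc n. a i * a j * P i j) > 0"
    and "\<exists>i<n. a i \<noteq> 0"
  shows "(\<Sum>i<n. \<Sum>j<n. a i * a j * (P i j - P i n * P n j / P n n)) > 0"
proof -
  have "P n n > 0" by (rule pos_def_diag_pos[OF pd]) auto
  \<comment> \<open>extend \<open>a\<close> by the entry that makes the last row of \<open>P\<close> orthogonal to it\<close>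
  define a' where "a' i = (if i < n then a i else - (\<Sum>j<n. P n j * a j) / P n n)" for i
  have "(\<Sum>i<Suc n. P n i * a' i) = 0"
    using \<open>P n n > 0\<close> by (simp add: a'_def)
  moreover have "(\<Sum>i<Suc n. \<Sum>j<Suc n. a' i * a' j * P i j) > 0"
    using \<open>\<exists>i<n. a i \<noteq> 0\<close> by (intro pd) (auto simp: a'_def)
  ultimately have "(\<Sum>i<n. \<Sum>j<n. a' i * a' j * (P i j - P i n * P n j / P n n)) > 0"
    using schur_complement_identity[of n P, OF sym, of a' a'] \<open>P n n > 0\<close> by simp
  then show ?thesis by (simp add: a'_def)
qed

lemma gram_factor_Suc:
  fixes P L' :: "nat \<Rightarrow> nat \<Rightarrow> real"
  assumes sym: "\<And>i. i < n \<Longrightarrow> P i n = P n i" and "P n n > 0"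
    and L': "\<And>a b. (\<Sum>i<n. \<Sum>j<n. a i * b j * (P i j - P i n * P n j / P n n)) =
      (\<Sum>l<n. (\<Sum>i<n. L' l i * a i) * (\<Sum>j<n. L' l j * b j))"
  shows "\<exists>L. \<forall>a b. (\<Sum>i<Suc n. \<Sum>j<Suc n. a i * b j * P i j) =
    (\<Sum>l<Suc n. (\<Sum>i<Suc n. L l i * a i) * (\<Sum>j<Suc n. L l j * b j))"
proof -
  \<comment> \<open>one Cholesky step: the new last row is the last row of \<open>P\<close> scaled by \<open>1 / sqrt (P n n)\<close>\<close>
  define L where "L l i = (if l < n then (if i < n then L' l i else 0) else P n i / sqrt (P n n))" for l i
  have "(\<Sum>i<Suc n. \<Sum>j<Suc n. a i * b j * P i j) =
    (\<Sum>l<Suc n. (\<Sum>i<Suc n. L l i * a i) * (\<Sum>j<Suc n. L l j * b j))" for a b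
  proof -
    have row: "(\<Sum>i<Suc n. L l i * a i) = (\<Sum>i<n. L' l i * a i)" if "l < n" for l a
      using that by (simp add: L_def)
    have last: "(\<Sum>i<Suc n. L n i * a i) = (\<Sum>i<Suc n. P n i * a i) / sqrt (P n n)" for a
      by (simp add: L_def sum_divide_distrib add_divide_distrib)
    have "(\<Sum>l<Suc n. (\<Sum>i<Suc n. L l i * a i) * (\<Sum>j<Suc n. L l j * b j)) =
      (\<Sum>l<n. (\<Sum>i<Suc n. L l i * a i) * (\<Sum>j<Suc n. L l j * b j))
      + (\<Sum>i<Suc n. L n i * a i) * (\<Sum>j<Suc n. L n j * b j)"
      by (rule sum.lessThan_Suc)
    also have "(\<Sum>l<n. (\<Sum>i<Suc n. L l i * a i) * (\<Sum>j<Suc n. L l j * b j)) =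
      (\<Sum>i<n. \<Sum>j<n. a i * b j * (P i j - P i n * P n j / P n n))"
      unfolding L' by (rule sum.cong[OF refl]) (simp only: lessThan_iff row)
    also have "(\<Sum>i<Suc n. L n i * a i) * (\<Sum>j<Suc n. L n j * b j) =
      (\<Sum>i<Suc n. P n i * a i) * (\<Sum>j<Suc n. P n j * b j) / P n n"
      unfolding last using \<open>P n n > 0\<close> by (simp add: field_simps)
    finally show ?thesis
      using schur_complement_identity[of n P, OF sym] \<open>P n n > 0\<close> by simp
  qed
  then show ?thesis by blast
qed

lemma pos_def_gram_factor:
  fixes P :: "nat \<Rightarrow> nat \<Rightarrow> real"
  assumes "\<And>i j. i < n \<Longrightarrow> j < n \<Longrightarrow> P i j = P j i"
    and "\<And>a. (\<exists>i<n. a i \<noteq> 0) \<Longrightarrow> (\<Sum>i<n. \<Sum>j<n. a i * a j * P i j) > 0"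
  shows "\<exists>L. \<forall>a b. (\<Sum>i<n. \<Sum>j<n. a i * b j * P i j) =
    (\<Sum>l<n. (\<Sum>i<n. L l i * a i) * (\<Sum>j<n. L l j * b j))"
  using assms
proof (induction n arbitrary: P)
  case 0
  then show ?case by simp
next
  case (Suc n)
  have sym: "\<And>i. i < n \<Longrightarrow> P i n = P n i" using Suc.prems(1) by simp
  have "P n n > 0" by (rule pos_def_diag_pos[OF Suc.prems(2)]) auto
  have "\<exists>L'. \<forall>a b. (\<Sum>i<n. \<Sum>j<n. a i * b j * (P i j - P i n * P n j / P n n)) =
    (\<Sum>l<n. (\<Sum>i<n. L' l i * a i) * (\<Sum>j<n. L' l j * b j))"
  proof (rule Suc.IH)
    show "(\<Sum>i<n. \<Sum>j<n. a i * a j * (P i j - P i n * P n j / P n n)) > 0" if "\<exists>i<n. a i \<noteq> 0" for a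
      by (rule schur_complement_pos_def[OF sym Suc.prems(2) that])
  qed (use Suc.prems(1) in simp)
  then show ?case
    using gram_factor_Suc[of n P, OF sym \<open>P n n > 0\<close>] by blast
qed

lemma kernel_uniform_modulus:
  fixes S :: "'a::metric_space set" and h :: "'a \<Rightarrow> 'a \<Rightarrow> real" and \<epsilon> :: real
  assumes "compact S" and h: "continuous_on (S \<times> S) (\<lambda>(x, x'). h x x')" and "\<epsilon> > 0"
  obtains \<delta> where "\<delta> > 0" "\<And>x x' y y'. x \<in> S \<Longrightarrow> x' \<in> S \<Longrightarrow> y \<in> S \<Longrightarrow> y' \<in> S \<Longrightarrow>
    dist x y < \<delta> \<Longrightarrow> dist x' y' < \<delta> \<Longrightarrow> \<bar>h x x' - h y y'\<bar> \<le> \<epsilon>"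
proof -
  have "uniformly_continuous_on (S \<times> S) (\<lambda>(x, x'). h x x')"
    using compact_uniformly_continuous[OF h compact_Times[OF \<open>compact S\<close> \<open>compact S\<close>]] .
  then obtain \<delta> where "\<delta> > 0" and \<delta>: "\<And>z z'. z \<in> S \<times> S \<Longrightarrow> z' \<in> S \<times> S \<Longrightarrow> dist z' z < \<delta> \<Longrightarrow>
      dist ((\<lambda>(x, x'). h x x') z') ((\<lambda>(x, x'). h x x') z) < \<epsilon>"
    unfolding uniformly_continuous_on_def using \<open>\<epsilon> > 0\<close> by metis
  show thesis
  proof (rule that[of "\<delta> / 2"])
    fix x x' y y' assume "x \<in> S" "x' \<in> S" "y \<in> S" "y' \<in> S" "dist x y < \<delta> / 2" "dist x' y' < \<delta> / 2"
    moreover have "dist (x, x') (y, y') \<le> dist x y + dist x' y'"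
      unfolding dist_Pair_Pair by (rule sqrt_sum_squares_le_sum) auto
    ultimately show "\<bar>h x x' - h y y'\<bar> \<le> \<epsilon>"
      using \<delta>[of "(y, y')" "(x, x')"] by (simp add: dist_real_def)
  qed (use \<open>\<delta> > 0\<close> in simp)
qed

lemma kernel_discretization:
  fixes S :: "'a::metric_space set" and h :: "'a \<Rightarrow> 'a \<Rightarrow> real" and \<epsilon> :: real
  assumes "compact S" and h: "continuous_on (S \<times> S) (\<lambda>(x, x'). h x x')" and "\<epsilon> > 0"
  obtains n p \<psi> where "\<forall>i<n. p i \<in> S" "partition_of_unity_on S n \<psi>"
    "\<forall>x\<in>S. \<forall>x'\<in>S. \<bar>h x x' - (\<Sum>i<n. \<Sum>j<n. \<psi> i x * \<psi> j x' * h (p i) (p j))\<bar> \<le> \<epsilon>"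
proof -
  obtain \<delta> where "\<delta> > 0" and close: "\<And>x x' y y'. x \<in> S \<Longrightarrow> x' \<in> S \<Longrightarrow> y \<in> S \<Longrightarrow> y' \<in> S \<Longrightarrow>
    dist x y < \<delta> \<Longrightarrow> dist x' y' < \<delta> \<Longrightarrow> \<bar>h x x' - h y y'\<bar> \<le> \<epsilon>"
    by (rule kernel_uniform_modulus[OF assms]) (rule that)
  obtain n p \<psi> where p: "\<forall>i<n. p i \<in> S" and \<psi>: "partition_of_unity_on S n \<psi>"
    and \<psi>_supp: "\<forall>i. \<forall>x\<in>S. \<psi> i x \<noteq> 0 \<longrightarrow> dist x (p i) < \<delta>"
    using partition_of_unity_subordinate_balls[OF \<open>compact S\<close> \<open>\<delta> > 0\<close>] by blast
  have \<psi>_nonneg: "\<And>i x. x \<in> S \<Longrightarrow> 0 \<le> \<psi> i x" and \<psi>_sum: "\<And>x. x \<in> S \<Longrightarrow> (\<Sum>i<n. \<psi> i x) = 1"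
    using \<psi> unfolding partition_of_unity_on_def by auto
  show thesis
  proof (rule that[OF p \<psi>], intro ballI)
    fix x x' assume x: "x \<in> S" and x': "x' \<in> S"
    have "(\<Sum>i<n. \<Sum>j<n. \<psi> i x * \<psi> j x') = 1"
      using \<psi>_sum[OF x] \<psi>_sum[OF x'] by (simp add: sum_product[symmetric])
    then have "h x x' = (\<Sum>i<n. \<Sum>j<n. \<psi> i x * \<psi> j x' * h x x')"
      by (simp add: sum_distrib_right[symmetric])
    then have "h x x' - (\<Sum>i<n. \<Sum>j<n. \<psi> i x * \<psi> j x' * h (p i) (p j)) =
        (\<Sum>i<n. \<Sum>j<n. \<psi> i x * \<psi> j x' * (h x x' - h (p i) (p j)))"
      by (simp add: sum_subtractf right_diff_distrib)
    also have "\<bar>\<dots>\<bar> \<le> (\<Sum>i<n. \<Sum>j<n. \<psi> i x * \<psi> j x' * \<epsilon>)"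
    proof (rule order_trans[OF sum_abs sum_mono], rule order_trans[OF sum_abs sum_mono])
      fix i j assume "i \<in> {..<n}" "j \<in> {..<n}"
      have "\<psi> i x * \<psi> j x' * \<bar>h x x' - h (p i) (p j)\<bar> \<le> \<psi> i x * \<psi> j x' * \<epsilon>"
      proof (cases "\<psi> i x = 0 \<or> \<psi> j x' = 0")
        case False
        then have "\<bar>h x x' - h (p i) (p j)\<bar> \<le> \<epsilon>"
          using \<open>i \<in> {..<n}\<close> \<open>j \<in> {..<n}\<close> x x' p \<psi>_supp by (intro close) auto
        then show ?thesis
          using \<psi>_nonneg[OF x] \<psi>_nonneg[OF x'] by (intro mult_left_mono) auto
      qed auto
      then show "\<bar>\<psi> i x * \<psi> j x' * (h x x' - h (p i) (p j))\<bar> \<le> \<psi> i x * \<psi> j x' * \<epsilon>"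
        using \<psi>_nonneg[OF x, of i] \<psi>_nonneg[OF x', of j] by (simp add: abs_mult)
    qed
    also have "\<dots> = \<epsilon>"
      using \<open>(\<Sum>i<n. \<Sum>j<n. \<psi> i x * \<psi> j x') = 1\<close> by (simp add: sum_distrib_right[symmetric])
    finally show "\<bar>h x x' - (\<Sum>i<n. \<Sum>j<n. \<psi> i x * \<psi> j x' * h (p i) (p j))\<bar> \<le> \<epsilon>" .
  qed
qed

lemma double_sum_add_diagonal:
  fixes a b :: "nat \<Rightarrow> real" and Q :: "nat \<Rightarrow> nat \<Rightarrow> real"
  shows "(\<Sum>i<n. \<Sum>j<n. a i * b j * (Q i j + (if i = j then \<eta> else 0))) =
    (\<Sum>i<n. \<Sum>j<n. a i * b j * Q i j) + \<eta> * (\<Sum>i<n. a i * b i)"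
proof -
  have "(\<Sum>j<n. a i * b j * (if i = j then \<eta> else 0)) = \<eta> * (a i * b i)" if "i < n" for i
    using that by (simp add: if_distrib[of "\<lambda>t. _ * t"] cong: if_cong)
  then show ?thesis
    by (simp add: distrib_left sum.distrib sum_distrib_left)
qed

lemma partition_of_unity_on_inner:
  assumes "partition_of_unity_on S n \<psi>" "x \<in> S" "x' \<in> S"
  shows "0 \<le> (\<Sum>i<n. \<psi> i x * \<psi> i x')" "(\<Sum>i<n. \<psi> i x * \<psi> i x') \<le> 1"
proof -
  have nonneg: "\<And>i x. x \<in> S \<Longrightarrow> 0 \<le> \<psi> i x" and sum: "\<And>x. x \<in> S \<Longrightarrow> (\<Sum>i<n. \<psi> i x) = 1"
    using assms(1) unfolding partition_of_unity_on_def by auto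
  show "0 \<le> (\<Sum>i<n. \<psi> i x * \<psi> i x')"
    using nonneg assms(2,3) by (intro sum_nonneg) simp
  have "\<psi> i x' \<le> 1" if "i < n" for i
    using member_le_sum[of i "{..<n}" "\<lambda>i. \<psi> i x'"] nonneg[OF assms(3)] sum[OF assms(3)] that by simp
  then have "(\<Sum>i<n. \<psi> i x * \<psi> i x') \<le> (\<Sum>i<n. \<psi> i x * 1)"
    using nonneg[OF assms(2)] by (intro sum_mono mult_left_mono) auto
  then show "(\<Sum>i<n. \<psi> i x * \<psi> i x') \<le> 1"
    using sum[OF assms(2)] by simp
qed

lemma ridge_centered_kernel_gram_factor:
  fixes n :: nat and \<eta> :: real
  assumes h: "cpd_kernel S h" and "y0 \<in> S" "\<forall>i<n. p i \<in> S" "\<eta> > 0"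
  shows "\<exists>L. \<forall>a b. (\<Sum>i<n. \<Sum>j<n. a i * b j * (centered_kernel h y0 (p i) (p j) + (if i = j then \<eta> else 0))) =
    (\<Sum>l<n. (\<Sum>i<n. L l i * a i) * (\<Sum>j<n. L l j * b j))"
proof (rule pos_def_gram_factor)
  have "\<forall>x\<in>S. \<forall>y\<in>S. h x y = h y x"
    using h unfolding cpd_kernel_def is_kernel_def by auto
  then show "centered_kernel h y0 (p i) (p j) + (if i = j then \<eta> else 0) =
    centered_kernel h y0 (p j) (p i) + (if j = i then \<eta> else 0)" if "i < n" "j < n" for i j
    using assms(2,3) that unfolding centered_kernel_def by auto
  show "(\<Sum>i<n. \<Sum>j<n. a i * a j * (centered_kernel h y0 (p i) (p j) + (if i = j then \<eta> else 0))) > 0"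
    if nonzero: "\<exists>i<n. a i \<noteq> 0" for a
  proof -
    obtain i0 where "i0 < n" "a i0 \<noteq> 0" using nonzero by blast
    then have "0 < (\<Sum>i<n. a i * a i)"
      by (intro sum_pos2[of _ i0]) (auto simp: zero_less_mult_iff linorder_neq_iff)
    moreover have "0 \<le> (\<Sum>i<n. \<Sum>j<n. a i * a j * centered_kernel h y0 (p i) (p j))"
      using centered_kernel_psd[OF h \<open>y0 \<in> S\<close>] assms(3) by blast
    ultimately show ?thesis
      unfolding double_sum_add_diagonal using \<open>\<eta> > 0\<close> by (simp add: add_nonneg_pos)
  qed
qed

lemma cpd_kernel_feature_approx:
  fixes S :: "'a::metric_space set" and h :: "'a \<Rightarrow> 'a \<Rightarrow> real"
  assumes "compact S" "S \<noteq> {}" and h: "cpd_kernel S h" and "\<epsilon> > 0"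
  shows "\<exists>(n::nat) \<phi> u \<kappa>. (\<forall>l. continuous_on S (\<phi> l)) \<and> continuous_on S u \<and>
    (\<forall>x\<in>S. \<forall>x'\<in>S. \<bar>h x x' - ((\<Sum>l<n. \<phi> l x * \<phi> l x') + u x + u x' + \<kappa>)\<bar> \<le> \<epsilon>)"
proof -
  have sym: "\<forall>x\<in>S. \<forall>y\<in>S. h x y = h y x" and cont: "continuous_on (S \<times> S) (\<lambda>(x, y). h x y)"
    using h unfolding cpd_kernel_def is_kernel_def by auto
  obtain n p \<psi> where p: "\<forall>i<n. p i \<in> S" and \<psi>: "partition_of_unity_on S n \<psi>"
    and disc: "\<forall>x\<in>S. \<forall>x'\<in>S. \<bar>h x x' - (\<Sum>i<n. \<Sum>j<n. \<psi> i x * \<psi> j x' * h (p i) (p j))\<bar> \<le> \<epsilon> / 2"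
    using kernel_discretization[OF \<open>compact S\<close> cont half_gt_zero[OF \<open>\<epsilon> > 0\<close>]] by blast
  obtain y0 where "y0 \<in> S" using \<open>S \<noteq> {}\<close> by blast
  obtain L where L: "\<And>a b. (\<Sum>i<n. \<Sum>j<n. a i * b j *
      (centered_kernel h y0 (p i) (p j) + (if i = j then \<epsilon> / 2 else 0))) =
    (\<Sum>l<n. (\<Sum>i<n. L l i * a i) * (\<Sum>j<n. L l j * b j))"
    using ridge_centered_kernel_gram_factor[OF h \<open>y0 \<in> S\<close> p half_gt_zero[OF \<open>\<epsilon> > 0\<close>]] by blast
  define \<phi> where "\<phi> l x = (\<Sum>i<n. L l i * \<psi> i x)" for l x
  define u where "u x = (\<Sum>i<n. \<psi> i x * h (p i) y0)" for x
  have \<psi>_cont: "continuous_on S (\<psi> i)" and \<psi>_sum: "x \<in> S \<Longrightarrow> (\<Sum>i<n. \<psi> i x) = 1" for i x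
    using \<psi> unfolding partition_of_unity_on_def by auto
  have \<phi>_cont: "continuous_on S (\<phi> l)" for l
    unfolding \<phi>_def by (intro continuous_intros \<psi>_cont)
  have u_cont: "continuous_on S u"
    unfolding u_def by (intro continuous_intros \<psi>_cont)
  have approx: "\<bar>h x x' - ((\<Sum>l<n. \<phi> l x * \<phi> l x') + u x + u x' + - h y0 y0)\<bar> \<le> \<epsilon>"
    if x: "x \<in> S" and x': "x' \<in> S" for x x'
  proof -
    have u': "(\<Sum>j<n. \<psi> j x' * h y0 (p j)) = u x'"
      unfolding u_def using sym p \<open>y0 \<in> S\<close> by (intro sum.cong) auto
    have "(\<Sum>l<n. \<phi> l x * \<phi> l x') = (\<Sum>i<n. \<Sum>j<n. \<psi> i x * \<psi> j x' *
        (centered_kernel h y0 (p i) (p j) + (if i = j then \<epsilon> / 2 else 0)))"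
      unfolding L \<phi>_def ..
    also have "\<dots> = (\<Sum>i<n. \<Sum>j<n. \<psi> i x * \<psi> j x' * h (p i) (p j)) - u x - u x' + h y0 y0
        + \<epsilon> / 2 * (\<Sum>i<n. \<psi> i x * \<psi> i x')"
      unfolding double_sum_add_diagonal centered_kernel_def double_sum_centered
      by (simp add: \<psi>_sum[OF x] \<psi>_sum[OF x'] u' u_def)
    finally have "(\<Sum>l<n. \<phi> l x * \<phi> l x') + u x + u x' + - h y0 y0 =
        (\<Sum>i<n. \<Sum>j<n. \<psi> i x * \<psi> j x' * h (p i) (p j)) + \<epsilon> / 2 * (\<Sum>i<n. \<psi> i x * \<psi> i x')"
      by simp
    moreover have "\<bar>h x x' - (\<Sum>i<n. \<Sum>j<n. \<psi> i x * \<psi> j x' * h (p i) (p j))\<bar> \<le> \<epsilon> / 2"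
      using disc x x' by blast
    moreover have "0 \<le> \<epsilon> / 2 * (\<Sum>i<n. \<psi> i x * \<psi> i x')" "\<epsilon> / 2 * (\<Sum>i<n. \<psi> i x * \<psi> i x') \<le> \<epsilon> / 2"
      using partition_of_unity_on_inner[OF \<psi> x x'] \<open>\<epsilon> > 0\<close> by (simp_all add: mult_left_le)
    ultimately show ?thesis
      unfolding abs_le_iff by linarith
  qed
  show ?thesis
    by (intro exI[of _ n] exI[of _ \<phi>] exI[of _ u] exI[of _ "- h y0 y0"])
      (use \<phi>_cont u_cont approx in blast)
qed

lemma innerK_append_coordinate:
  fixes r :: real
  assumes "r \<noteq> 0"
  shows "innerK (Suc n) (\<lambda>l. if l < n then v l else r + a / r) (\<lambda>l. if l < n then v' l else r + a' / r) =
    innerK n v v' + r\<^sup>2 + a + a' + a * a' / r\<^sup>2"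
proof -
  have "(\<Sum>l<n. (if l < n then v l else r + a / r) * (if l < n then v' l else r + a' / r)) = innerK n v v'"
    unfolding innerK_def by (rule sum.cong) auto
  moreover have "(r + a / r) * (r + a' / r) = r\<^sup>2 + a + a' + a * a' / r\<^sup>2"
    using assms by (simp add: field_simps power2_eq_square)
  ultimately show ?thesis
    unfolding innerK_def by simp
qed

lemma lifted_features_shallow_net_approx:
  fixes S :: "(real ^ 'p::finite) set" and \<phi> :: "nat \<Rightarrow> real ^ 'p \<Rightarrow> real"
    and h :: "real ^ 'p \<Rightarrow> real ^ 'p \<Rightarrow> real" and n :: nat and \<epsilon> r Bu \<kappa> :: real
  assumes \<sigma>: "admissible_activation \<sigma>" and "compact S"
    and \<phi>: "\<forall>l. continuous_on S (\<phi> l)" and u: "continuous_on S u" and Bu: "\<forall>x\<in>S. \<bar>u x\<bar> \<le> Bu"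
    and approx: "\<forall>x\<in>S. \<forall>x'\<in>S. \<bar>h x x' - ((\<Sum>l<n. \<phi> l x * \<phi> l x') + u x + u x' + \<kappa>)\<bar> \<le> \<epsilon> / 2"
    and "\<epsilon> > 0" "r > 0"
  shows "\<exists>T A B c. \<forall>x\<in>S. \<forall>x'\<in>S. \<bar>h x x' -
    (innerK (Suc n) (shallow_net \<sigma> T A B c x) (shallow_net \<sigma> T A B c x') - (r\<^sup>2 - \<kappa>))\<bar> < \<epsilon> + Bu\<^sup>2 / r\<^sup>2"
proof -
  define \<Phi> where "\<Phi> l x = (if l < n then \<phi> l x else r + u x / r)" for l x
  have "continuous_on S (\<Phi> l)" for l
    unfolding \<Phi>_def using \<phi> u \<open>r > 0\<close> by (cases "l < n") (auto intro!: continuous_intros)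
  then obtain T A B c where net: "\<forall>x\<in>S. \<forall>x'\<in>S. \<bar>innerK (Suc n) (\<lambda>l. \<Phi> l x) (\<lambda>l. \<Phi> l x')
      - innerK (Suc n) (shallow_net \<sigma> T A B c x) (shallow_net \<sigma> T A B c x')\<bar> \<le> \<epsilon> / 4"
    using shallow_net_inner_approx[OF \<sigma> \<open>compact S\<close>, of "Suc n" \<Phi> "\<epsilon> / 4"] \<open>\<epsilon> > 0\<close> by auto
  have "\<bar>h x x' - (innerK (Suc n) (shallow_net \<sigma> T A B c x) (shallow_net \<sigma> T A B c x') - (r\<^sup>2 - \<kappa>))\<bar>
      < \<epsilon> + Bu\<^sup>2 / r\<^sup>2" if x: "x \<in> S" and x': "x' \<in> S" for x x'
  proof -
    have "innerK (Suc n) (\<lambda>l. \<Phi> l x) (\<lambda>l. \<Phi> l x') =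
        (\<Sum>l<n. \<phi> l x * \<phi> l x') + r\<^sup>2 + u x + u x' + u x * u x' / r\<^sup>2"
      using innerK_append_coordinate[of r n] \<open>r > 0\<close> unfolding \<Phi>_def innerK_def by simp
    moreover have "\<bar>u x * u x'\<bar> \<le> Bu\<^sup>2"
      unfolding power2_eq_square abs_mult by (rule mult_mono) (use Bu x x' in auto)
    then have "\<bar>u x * u x' / r\<^sup>2\<bar> \<le> Bu\<^sup>2 / r\<^sup>2"
      by (simp add: abs_divide divide_right_mono)
    ultimately show ?thesis
      using approx net x x' \<open>\<epsilon> > 0\<close> unfolding abs_le_iff abs_less_iff by fastforce
  qed
  then show ?thesis by blast
qed

lemma cpd_kernel_shallow_net_approx:
  fixes S :: "(real ^ 'p::finite) set" and h :: "real ^ 'p \<Rightarrow> real ^ 'p \<Rightarrow> real"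
  assumes \<sigma>: "admissible_activation \<sigma>" and "compact S" "S \<noteq> {}" and h: "cpd_kernel S h" and "\<epsilon> > 0"
  shows "\<exists>C>0. \<exists>r0>0. \<forall>r\<ge>r0.
    \<exists>(K::nat) (T::nat) (A::nat \<Rightarrow> nat \<Rightarrow> real) (B::nat \<Rightarrow> 'p \<Rightarrow> real) (c::nat \<Rightarrow> real) (\<gamma>::real).
      \<bar>\<gamma>\<bar> \<le> C * r\<^sup>2 \<and>
      (\<forall>x\<in>S. \<forall>x'\<in>S. \<bar>h x x' - (innerK K (shallow_net \<sigma> T A B c x) (shallow_net \<sigma> T A B c x') - \<gamma>)\<bar>
        < \<epsilon> + C / r\<^sup>2)"
proof -
  obtain n :: nat and \<phi> u \<kappa> where \<phi>: "\<forall>l. continuous_on S (\<phi> l)" and u: "continuous_on S u"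
    and approx: "\<forall>x\<in>S. \<forall>x'\<in>S. \<bar>h x x' - ((\<Sum>l<n. \<phi> l x * \<phi> l x') + u x + u x' + \<kappa>)\<bar> \<le> \<epsilon> / 2"
    using cpd_kernel_feature_approx[OF \<open>compact S\<close> \<open>S \<noteq> {}\<close> h half_gt_zero[OF \<open>\<epsilon> > 0\<close>]] by blast
  have "bounded (u ` S)"
    by (rule compact_imp_bounded[OF compact_continuous_image[OF u \<open>compact S\<close>]])
  then obtain Bu where Bu: "\<forall>x\<in>S. \<bar>u x\<bar> \<le> Bu"
    unfolding bounded_iff by auto
  define C where "C = 1 + \<bar>\<kappa>\<bar> + Bu\<^sup>2"
  have "C > 0" unfolding C_def by (simp add: add_pos_nonneg)
  have main: "\<exists>(K::nat) (T::nat) (A::nat \<Rightarrow> nat \<Rightarrow> real) (B::nat \<Rightarrow> 'p \<Rightarrow> real) (c::nat \<Rightarrow> real) (\<gamma>::real).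
      \<bar>\<gamma>\<bar> \<le> C * r\<^sup>2 \<and>
      (\<forall>x\<in>S. \<forall>x'\<in>S. \<bar>h x x' - (innerK K (shallow_net \<sigma> T A B c x) (shallow_net \<sigma> T A B c x') - \<gamma>)\<bar>
        < \<epsilon> + C / r\<^sup>2)" if "r \<ge> 1" for r :: real
  proof -
    have "r > 0" "1 \<le> r\<^sup>2" using that by (simp_all add: one_le_power)
    then have "\<bar>\<kappa>\<bar> \<le> \<bar>\<kappa>\<bar> * r\<^sup>2" by (simp add: mult_le_cancel_left1)
    moreover have "C * r\<^sup>2 = r\<^sup>2 + \<bar>\<kappa>\<bar> * r\<^sup>2 + Bu\<^sup>2 * r\<^sup>2"
      unfolding C_def by (simp add: algebra_simps)
    moreover have "0 \<le> Bu\<^sup>2 * r\<^sup>2" by simp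
    ultimately have offset: "\<bar>r\<^sup>2 - \<kappa>\<bar> \<le> C * r\<^sup>2"
      using \<open>1 \<le> r\<^sup>2\<close> unfolding abs_le_iff by linarith
    have "Bu\<^sup>2 / r\<^sup>2 < C / r\<^sup>2"
      unfolding C_def using \<open>r > 0\<close> by (intro divide_strict_right_mono) auto
    obtain T A B c where net: "\<forall>x\<in>S. \<forall>x'\<in>S. \<bar>h x x' -
        (innerK (Suc n) (shallow_net \<sigma> T A B c x) (shallow_net \<sigma> T A B c x') - (r\<^sup>2 - \<kappa>))\<bar> < \<epsilon> + Bu\<^sup>2 / r\<^sup>2"
      using lifted_features_shallow_net_approx[OF \<sigma> \<open>compact S\<close> \<phi> u Bu approx \<open>\<epsilon> > 0\<close> \<open>r > 0\<close>]
      by blast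
    show ?thesis
    proof (intro exI conjI)
      show "\<bar>r\<^sup>2 - \<kappa>\<bar> \<le> C * r\<^sup>2" by (fact offset)
      show "\<forall>x\<in>S. \<forall>x'\<in>S. \<bar>h x x' -
        (innerK (Suc n) (shallow_net \<sigma> T A B c x) (shallow_net \<sigma> T A B c x') - (r\<^sup>2 - \<kappa>))\<bar> < \<epsilon> + C / r\<^sup>2"
        using net \<open>Bu\<^sup>2 / r\<^sup>2 < C / r\<^sup>2\<close> by fastforce
    qed
  qed
  show ?thesis
    by (rule exI[of _ C], rule conjI[OF \<open>C > 0\<close>], rule exI[of _ "1 :: real"], rule conjI[OF zero_less_one])
      (use main in blast)
qed

lemma compact_cube: "compact (cube M :: (real ^ 'p::finite) set)"
proof -
  have "cube M = cbox (\<chi> i. - M) (\<chi> i. M :: real ^ 'p)"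
    unfolding cube_def by (auto simp: mem_box_cart abs_le_iff) (metis minus_le_iff)+
  then show ?thesis by simp
qed

theorem theorem4p2:
  fixes M :: real and Y :: "(real ^ 'k) set"
    and f :: "real ^ 'p \<Rightarrow> real ^ 'k"
    and g :: "real ^ 'k \<Rightarrow> real ^ 'k \<Rightarrow> real"
    and \<sigma> :: "real \<Rightarrow> real"
  assumes "M > 0" and "compact Y"
    and "continuous_on (cube M) f" and "f ` cube M \<subseteq> Y"
    and "cpd_kernel Y g"
    and "admissible_activation \<sigma>"
  shows "\<forall>\<epsilon>>0. \<exists>C>0. \<exists>r0>0. \<forall>r\<ge>r0.
     \<exists>(K::nat) (T::nat) (A::nat \<Rightarrow> nat \<Rightarrow> real) (B::nat \<Rightarrow> 'p \<Rightarrow> real) (c::nat \<Rightarrow> real) (\<gamma>::real).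
       \<bar>\<gamma>\<bar> \<le> C * r\<^sup>2 \<and>
       (\<forall>x\<in>cube M. \<forall>x'\<in>cube M.
          \<bar>g (f x) (f x') - (innerK K (shallow_net \<sigma> T A B c x) (shallow_net \<sigma> T A B c x') - \<gamma>)\<bar>
            < \<epsilon> + C / r\<^sup>2)"
proof -
  have "0 \<in> cube M" unfolding cube_def using \<open>M > 0\<close> by simp
  then have "cube M \<noteq> {}" by blast
  moreover have "cpd_kernel (cube M) (\<lambda>x x'. g (f x) (f x'))"
    using cpd_kernel_comp[OF \<open>cpd_kernel Y g\<close> \<open>continuous_on (cube M) f\<close> \<open>f ` cube M \<subseteq> Y\<close>] .
  ultimately show ?thesis
    using cpd_kernel_shallow_net_approx[OF \<open>admissible_activation \<sigma>\<close> compact_cube] by blast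
qed

end
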